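(* Let $\omega_0>0$, $\lambda\in\mathbb R$, $\omega\ge0$ measurable, $g\in\mathfrak h$, and let $G=G^*$ be a $2\times2$ matrix with zero diagonal entries in the $\sigma_z$-eigenbasis. Let $\mu$ be a Borel probability measure on $\mathfrak h$ that is even, i.e. $\mu(-A)=\mu(A)$ for all Borel $A\subset\mathfrak h$. For $f\in\mathfrak h$ let $U_t(f)$ solve $i\partial_tU_t(f)=[\tfrac12\omega_0\sigma_z+\sqrt2\lambda\,\mathrm{Re}\langle e^{-it\omega}f,g\rangle\,G]U_t(f)$, $U_0(f)=1$, and for a $2\times2$ matrix $X$ set $\Phi_t(X)=\int_{\mathfrak h}d\mu(f)\,U_t(f)XU_t(f)^*$. Then for all $t$: if $X$ is diagonal, $\Phi_t(X)$ is diagonal; if $X$ has zero diagonal entries, so does $\Phi_t(X)$. Consequently the diagonal and off-diagonal parts of the spin density matrix $\gamma(t)=\Phi_t(\gamma_0)$ evolve independently.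
   Context: $\mathfrak h=L^2(\mathbb R^3,d^3k)$ with inner product $\langle f,g\rangle=\int\overline fg$; $e^{-it\omega}$ acts by multiplication; "diagonal" refers to the eigenbasis $\sigma_z|1\rangle=|1\rangle$, $\sigma_z|2\rangle=-|2\rangle$. *)

theory Defs
  imports "HOL-Probability.Probability"
begin

text \<open>The one-particle space h = L^2(R^3, d^3k), represented by square-integrable
  functions real^3 => complex (inner products do not see a.e. differences).\<close>

definition L2 :: "(real^3 \<Rightarrow> complex) set" where
  "L2 = {f. f \<in> borel_measurable lborel \<and> integrable lborel (\<lambda>k. (cmod (f k))\<^sup>2)}"

definition l2inner :: "(real^3 \<Rightarrow> complex) \<Rightarrow> (real^3 \<Rightarrow> complex) \<Rightarrow> complex" where
  "l2inner f g = (\<integral>k. cnj (f k) * g k \<partial>lborel)"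

text \<open>Borel sigma-algebra of the separable Hilbert space h: generated by the
  continuous linear functionals f |-> <h,f>.\<close>
definition L2_borel_sets :: "(real^3 \<Rightarrow> complex) set set" where
  "L2_borel_sets = sigma_sets L2
     (\<Union>h\<in>L2. {(\<lambda>f. l2inner h f) -` B \<inter> L2 | B. B \<in> sets (borel :: complex measure)})"

definition evol :: "(real^3 \<Rightarrow> real) \<Rightarrow> real \<Rightarrow> (real^3 \<Rightarrow> complex) \<Rightarrow> (real^3 \<Rightarrow> complex)" where
  "evol \<omega> t f = (\<lambda>k. exp (- (\<i> * complex_of_real (t * \<omega> k))) * f k)"

text \<open>2x2 matrices, indices 1,2 = sigma_z-eigenbasis |1>, |2>.\<close>
definition sigma_z :: "complex^2^2" where
  "sigma_z = (\<chi> i j. if i = j then (if i = 1 then 1 else -1) else 0)"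

definition adj :: "complex^2^2 \<Rightarrow> complex^2^2" where
  "adj A = (\<chi> i j. cnj (A $ j $ i))"

definition is_diag :: "complex^2^2 \<Rightarrow> bool" where
  "is_diag X \<longleftrightarrow> X $ 1 $ 2 = 0 \<and> X $ 2 $ 1 = 0"

definition zero_diag :: "complex^2^2 \<Rightarrow> bool" where
  "zero_diag X \<longleftrightarrow> X $ 1 $ 1 = 0 \<and> X $ 2 $ 2 = 0"

definition Ham :: "real \<Rightarrow> real \<Rightarrow> (real^3 \<Rightarrow> real) \<Rightarrow> (real^3 \<Rightarrow> complex) \<Rightarrow> complex^2^2
    \<Rightarrow> real \<Rightarrow> (real^3 \<Rightarrow> complex) \<Rightarrow> complex^2^2" where
  "Ham \<omega>0 lam \<omega> g G t f =
     (\<omega>0 / 2) *\<^sub>R sigma_z + (sqrt 2 * lam * Re (l2inner (evol \<omega> t f) g)) *\<^sub>R G"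

definition Phi :: "(real^3 \<Rightarrow> complex) measure \<Rightarrow> (real \<Rightarrow> (real^3 \<Rightarrow> complex) \<Rightarrow> complex^2^2)
    \<Rightarrow> real \<Rightarrow> complex^2^2 \<Rightarrow> complex^2^2" where
  "Phi \<mu> U t X = (\<integral>f. U t f ** X ** adj (U t f) \<partial>\<mu>)"

end

theory Submission imports Defs begin

text \<open>The parity operator \<open>f \<mapsto> -f\<close> on the field is implemented on the spin by
  conjugation with \<open>\<sigma>\<^sub>z\<close>: since \<open>G\<close> is off-diagonal, \<open>\<sigma>\<^sub>z G \<sigma>\<^sub>z = -G\<close>, so the Hamiltonian
  for \<open>-f\<close> is \<open>\<sigma>\<^sub>z H(f) \<sigma>\<^sub>z\<close>, and by uniqueness of the unitary propagator
  \<open>U\<^sub>t(-f) = \<sigma>\<^sub>z U\<^sub>t(f) \<sigma>\<^sub>z\<close>. Hence the integrand \<open>U\<^sub>t(f) X U\<^sub>t(f)\<^sup>*\<close> has odd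
  off-diagonal entries when \<open>X\<close> is diagonal, and odd diagonal entries when \<open>X\<close> is
  off-diagonal. Integrating odd functions against the even measure \<open>\<mu>\<close> gives zero.\<close>

lemma matrix_mult_nth_2:
  "((A::complex^2^2) ** B) $ i $ j = A $ i $ 1 * B $ 1 $ j + A $ i $ 2 * B $ 2 $ j"
  by (simp add: matrix_matrix_mult_def sum_2)

lemma matrix_eq_iff_2:
  "(A::complex^2^2) = B \<longleftrightarrow>
     A $ 1 $ 1 = B $ 1 $ 1 \<and> A $ 1 $ 2 = B $ 1 $ 2 \<and> A $ 2 $ 1 = B $ 2 $ 1 \<and> A $ 2 $ 2 = B $ 2 $ 2"
  by (auto simp: vec_eq_iff forall_2)

lemma bounded_bilinear_matrix_mult_2:
  "bounded_bilinear ((**) :: complex^2^2 \<Rightarrow> complex^2^2 \<Rightarrow> complex^2^2)"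
proof -
  have "bilinear ((**) :: complex^2^2 \<Rightarrow> complex^2^2 \<Rightarrow> complex^2^2)"
    unfolding bilinear_def linear_iff
    by (auto simp: matrix_eq_iff_2 matrix_mult_nth_2 algebra_simps vector_scaleR_component)
  then show ?thesis
    using bilinear_conv_bounded_bilinear by blast
qed

lemmas matrix_mult_minus_2 =
  bounded_bilinear.minus_left[OF bounded_bilinear_matrix_mult_2]
  bounded_bilinear.minus_right[OF bounded_bilinear_matrix_mult_2]

lemma mat_mult_commute_2: "mat c ** (A::complex^2^2) = A ** mat c"
  by (simp add: matrix_eq_iff_2 matrix_mult_nth_2 mat_def)

lemma adj_nth: "adj A $ i $ j = cnj (A $ j $ i)"
  by (simp add: adj_def)

lemma bounded_linear_adj: "bounded_linear adj"
  unfolding linear_conv_bounded_linear[symmetric] linear_iff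
  by (auto simp: adj_def vec_eq_iff vector_scaleR_component)

lemma adj_matrix_mult: "adj (A ** B) = adj B ** adj A"
  by (simp add: matrix_eq_iff_2 matrix_mult_nth_2 adj_nth algebra_simps)

lemma adj_mat: "adj (mat c) = mat (cnj c)"
  by (simp add: adj_def mat_def vec_eq_iff)

lemma adj_add: "adj (A + B) = adj A + adj B"
  by (simp add: adj_def vec_eq_iff)

lemma adj_scaleR: "adj (r *\<^sub>R A) = r *\<^sub>R adj A"
  by (simp add: adj_def vec_eq_iff vector_scaleR_component)

definition solves_schroedinger :: "(real \<Rightarrow> complex^2^2) \<Rightarrow> (real \<Rightarrow> complex^2^2) \<Rightarrow> bool" where
  "solves_schroedinger H V \<longleftrightarrow> (\<forall>t. (V has_vector_derivative (mat (- \<i>) ** (H t ** V t))) (at t))"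

lemma solves_schroedinger_adj_mult_const:
  assumes herm: "\<And>t. adj (H t) = H t"
    and A: "solves_schroedinger H A" and B: "solves_schroedinger H B"
  shows "adj (A t) ** B t = adj (A 0) ** B 0"
proof -
  have "((\<lambda>s. adj (A s) ** B s) has_vector_derivative 0) (at s within UNIV)" for s
  proof -
    let ?K = "adj (A s) ** H s ** B s"
    have dA: "((\<lambda>s. adj (A s)) has_vector_derivative adj (mat (- \<i>) ** (H s ** A s))) (at s)"
      using bounded_linear.has_vector_derivative[OF bounded_linear_adj] A
      by (auto simp: solves_schroedinger_def)
    have "((\<lambda>s. adj (A s) ** B s) has_vector_derivative
        adj (A s) ** (mat (- \<i>) ** (H s ** B s)) + adj (mat (- \<i>) ** (H s ** A s)) ** B s) (at s)"
      using bounded_bilinear.has_vector_derivative[OF bounded_bilinear_matrix_mult_2 dA] B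
      by (auto simp: solves_schroedinger_def)
    moreover have "adj (A s) ** (mat (- \<i>) ** (H s ** B s)) = ?K ** mat (- \<i>)"
      by (metis mat_mult_commute_2 matrix_mul_assoc)
    moreover have "adj (mat (- \<i>) ** (H s ** A s)) ** B s = ?K ** mat \<i>"
      by (simp add: adj_matrix_mult adj_mat herm matrix_mul_assoc)
        (metis mat_mult_commute_2 matrix_mul_assoc)
    moreover have "?K ** mat (- \<i>) + ?K ** mat \<i> = 0"
      by (simp add: matrix_eq_iff_2 matrix_mult_nth_2 mat_def)
    ultimately show ?thesis
      by simp
  qed
  then obtain c where "\<And>s. s \<in> UNIV \<Longrightarrow> adj (A s) ** B s = c"
    using has_vector_derivative_zero_constant[OF convex_UNIV] by blast
  then show ?thesis
    by simp
qed

lemma solves_schroedinger_unique: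
  assumes herm: "\<And>t. adj (H t) = H t"
    and A: "solves_schroedinger H A" and B: "solves_schroedinger H B"
    and init: "A 0 = mat 1" "B 0 = mat 1"
  shows "A t = B t"
proof -
  have "adj (A t) ** A t = mat 1"
    using solves_schroedinger_adj_mult_const[OF herm A A] init by (simp add: adj_mat)
  then have unitary: "A t ** adj (A t) = mat 1"
    using matrix_left_right_inverse by blast
  have "adj (A t) ** B t = mat 1"
    using solves_schroedinger_adj_mult_const[OF herm A B] init by (simp add: adj_mat)
  then have "A t ** adj (A t) ** B t = A t"
    by (simp flip: matrix_mul_assoc)
  then show ?thesis
    by (simp add: unitary)
qed

lemma solves_schroedinger_conj:
  assumes V: "solves_schroedinger H V" and inv: "S' ** S = mat 1"
  shows "solves_schroedinger (\<lambda>t. S ** H t ** S') (\<lambda>t. S ** V t ** S')"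
  unfolding solves_schroedinger_def
proof
  fix t
  have lin: "bounded_linear (\<lambda>M. S ** M ** S')"
    using bounded_linear_compose[OF
        bounded_bilinear.bounded_linear_left[OF bounded_bilinear_matrix_mult_2]
        bounded_bilinear.bounded_linear_right[OF bounded_bilinear_matrix_mult_2]] by blast
  have "S ** H t ** S' ** (S ** V t ** S') = S ** (H t ** V t) ** S'"
    by (metis inv matrix_mul_assoc matrix_mul_rid)
  then have "S ** (mat (- \<i>) ** (H t ** V t)) ** S' = mat (- \<i>) ** (S ** H t ** S' ** (S ** V t ** S'))"
    by (metis mat_mult_commute_2 matrix_mul_assoc)
  then show "((\<lambda>t. S ** V t ** S') has_vector_derivative
      mat (- \<i>) ** (S ** H t ** S' ** (S ** V t ** S'))) (at t)"
    using bounded_linear.has_vector_derivative[OF lin] V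
    by (metis solves_schroedinger_def)
qed

lemma sigma_z_conj_nth:
  "(sigma_z ** A ** sigma_z) $ 1 $ 1 = A $ 1 $ 1" "(sigma_z ** A ** sigma_z) $ 2 $ 2 = A $ 2 $ 2"
  "(sigma_z ** A ** sigma_z) $ 1 $ 2 = - A $ 1 $ 2" "(sigma_z ** A ** sigma_z) $ 2 $ 1 = - A $ 2 $ 1"
  by (simp_all add: matrix_mult_nth_2 sigma_z_def)

lemma sigma_z_mult_sigma_z: "sigma_z ** sigma_z = mat 1"
  by (simp add: matrix_eq_iff_2 matrix_mult_nth_2 sigma_z_def mat_def)

lemma adj_sigma_z: "adj sigma_z = sigma_z"
  by (simp add: matrix_eq_iff_2 adj_nth sigma_z_def)

lemma sigma_z_conj_is_diag: "is_diag X \<Longrightarrow> sigma_z ** X ** sigma_z = X"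
  by (simp add: matrix_eq_iff_2 sigma_z_conj_nth is_diag_def)

lemma sigma_z_conj_zero_diag: "zero_diag X \<Longrightarrow> sigma_z ** X ** sigma_z = - X"
  by (simp add: matrix_eq_iff_2 sigma_z_conj_nth zero_diag_def)

lemma sigma_z_conj_sandwich:
  "(sigma_z ** U ** sigma_z) ** X ** adj (sigma_z ** U ** sigma_z)
     = sigma_z ** (U ** (sigma_z ** X ** sigma_z) ** adj U) ** sigma_z"
  by (simp add: adj_matrix_mult adj_sigma_z matrix_mul_assoc)

lemma adj_Ham:
  "adj G = G \<Longrightarrow> adj (Ham \<omega>0 lam \<omega> g G t f) = Ham \<omega>0 lam \<omega> g G t f"
  by (simp add: Ham_def adj_add adj_scaleR adj_sigma_z)

lemma Ham_uminus:
  assumes "zero_diag G"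
  shows "Ham \<omega>0 lam \<omega> g G t (- f) = sigma_z ** Ham \<omega>0 lam \<omega> g G t f ** sigma_z"
proof -
  have "l2inner (evol \<omega> t (- f)) g = - l2inner (evol \<omega> t f) g"
    by (simp add: l2inner_def evol_def flip: integral_minus)
  then show ?thesis
    using assms by (simp add: Ham_def matrix_eq_iff_2 matrix_mult_nth_2 vector_scaleR_component
        sigma_z_def zero_diag_def)
qed

lemma uminus_in_L2: "f \<in> L2 \<Longrightarrow> - f \<in> L2"
  by (simp add: L2_def fun_Compl_def)

lemma uminus_measurable_L2_borel:
  assumes "space M = L2" and "sets M = L2_borel_sets"
  shows "uminus \<in> measurable M M"
proof (rule measurable_sigma_sets[OF assms(2)[unfolded L2_borel_sets_def]])
  show "(\<Union>h\<in>L2. {(\<lambda>f. l2inner h f) -` B \<inter> L2 | B. B \<in> sets (borel :: complex measure)}) \<subseteq> Pow L2"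
    by auto
  show "uminus \<in> space M \<rightarrow> L2"
    using uminus_in_L2 assms(1) by auto
next
  fix Y assume "Y \<in> (\<Union>h\<in>L2. {(\<lambda>f. l2inner h f) -` B \<inter> L2 | B. B \<in> sets (borel :: complex measure)})"
  then obtain h B where h: "h \<in> L2" and B: "B \<in> sets (borel :: complex measure)"
    and Y: "Y = (\<lambda>f. l2inner h f) -` B \<inter> L2" by blast
  have "uminus -` B \<in> sets (borel :: complex measure)"
    using measurable_sets[OF borel_measurable_uminus[OF measurable_ident] B] by simp
  moreover have "uminus -` Y \<inter> space M = (\<lambda>f. l2inner h f) -` (uminus -` B) \<inter> L2"
  proof -
    have "l2inner h (- f) = - l2inner h f" for f
      by (simp add: l2inner_def fun_Compl_def)
    moreover have "- f \<in> L2 \<longleftrightarrow> f \<in> L2" for f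
      \<comment> \<open>Functions carry no group structure in this context, so \<open>- (- f)\<close> is unfolded pointwise.\<close>
      using uminus_in_L2[of "- f"] uminus_in_L2[of f] by (auto simp: fun_Compl_def)
    ultimately show ?thesis
      using Y assms(1) by auto
  qed
  ultimately show "uminus -` Y \<inter> space M \<in> sets M"
    unfolding assms(2) L2_borel_sets_def using h by (auto intro: sigma_sets.Basic)
qed

lemma propagator_uminus:
  assumes "adj G = G" and "zero_diag G" and "f \<in> L2"
    and init: "\<And>f. f \<in> L2 \<Longrightarrow> U 0 f = mat 1"
    and sol: "\<And>f. f \<in> L2 \<Longrightarrow> solves_schroedinger (\<lambda>s. Ham \<omega>0 lam \<omega> g G s f) (\<lambda>s. U s f)"
  shows "U t (- f) = sigma_z ** U t f ** sigma_z"
proof -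
  have "solves_schroedinger (\<lambda>s. Ham \<omega>0 lam \<omega> g G s (- f)) (\<lambda>s. sigma_z ** U s f ** sigma_z)"
    using solves_schroedinger_conj[OF sol[OF \<open>f \<in> L2\<close>] sigma_z_mult_sigma_z]
    by (simp add: Ham_uminus[OF \<open>zero_diag G\<close>])
  then show ?thesis
    using solves_schroedinger_unique[OF adj_Ham[OF \<open>adj G = G\<close>] sol[OF uminus_in_L2]]
      init assms(3) uminus_in_L2 sigma_z_mult_sigma_z by simp
qed

lemma distr_uminus_even_L2:
  assumes "space M = L2" and "sets M = L2_borel_sets"
    and even: "\<forall>A \<in> sets M. emeasure M (uminus -` A \<inter> space M) = emeasure M A"
  shows "distr M M uminus = M"
  by (rule measure_eqI)
    (simp_all add: emeasure_distr[OF uminus_measurable_L2_borel[OF assms(1,2)]] even)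

lemma integral_eq_0_if_odd:
  fixes h :: "'a \<Rightarrow> 'b::{banach, second_countable_topology}"
  assumes \<sigma>: "\<sigma> \<in> measurable M M" and invariant: "distr M M \<sigma> = M"
    and odd: "\<And>x. x \<in> space M \<Longrightarrow> h (\<sigma> x) = - h x"
  shows "integral\<^sup>L M h = 0"
proof (cases "integrable M h")
  case True
  then have "integral\<^sup>L M h = integral\<^sup>L M (\<lambda>x. h (\<sigma> x))"
    by (subst (1) invariant[symmetric]) (simp add: integral_distr[OF \<sigma>])
  also have "\<dots> = - integral\<^sup>L M h"
    by (simp add: odd cong: Bochner_Integration.integral_cong)
  finally show ?thesis
    by (metis eq_neg_iff_add_eq_0 scaleR_2 scaleR_eq_0_iff zero_neq_numeral)
qed (simp add: not_integrable_integral_eq)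

lemma integral_nth_nth_eq_0_if_odd:
  fixes F :: "'a \<Rightarrow> complex^2^2"
  assumes \<sigma>: "\<sigma> \<in> measurable M M" and invariant: "distr M M \<sigma> = M"
    and odd: "\<And>x. x \<in> space M \<Longrightarrow> F (\<sigma> x) $ i $ j = - F x $ i $ j"
  shows "integral\<^sup>L M F $ i $ j = 0"
proof (cases "integrable M F")
  case True
  have "bounded_linear (\<lambda>A::complex^2^2. A $ i $ j)"
    using bounded_linear_compose[OF bounded_linear_vec_nth bounded_linear_vec_nth] by blast
  then have "integral\<^sup>L M F $ i $ j = integral\<^sup>L M (\<lambda>x. F x $ i $ j)"
    by (rule integral_bounded_linear[symmetric, OF _ True])
  also have "\<dots> = 0"
    by (rule integral_eq_0_if_odd[OF \<sigma> invariant, where h = "\<lambda>x. F x $ i $ j", OF odd])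
  finally show ?thesis .
qed (simp add: not_integrable_integral_eq)

theorem mainTheorem13:
  fixes \<omega>0 lam :: real and \<omega> :: "real^3 \<Rightarrow> real" and g :: "real^3 \<Rightarrow> complex"
    and G :: "complex^2^2" and \<mu> :: "(real^3 \<Rightarrow> complex) measure"
    and U :: "real \<Rightarrow> (real^3 \<Rightarrow> complex) \<Rightarrow> complex^2^2"
  assumes "\<omega>0 > 0"
    and "\<omega> \<in> borel_measurable lborel" and "\<forall>k. \<omega> k \<ge> 0"
    and "g \<in> L2"
    and "adj G = G" and "G $ 1 $ 1 = 0" and "G $ 2 $ 2 = 0"
    and "prob_space \<mu>" and "space \<mu> = L2" and "sets \<mu> = L2_borel_sets"
    and "\<forall>A \<in> sets \<mu>. emeasure \<mu> ((\<lambda>f. - f) -` A \<inter> space \<mu>) = emeasure \<mu> A"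
    and "\<forall>f \<in> L2. U 0 f = mat 1"
    and "\<forall>f \<in> L2. \<forall>t. ((\<lambda>s. U s f) has_vector_derivative
            (mat (- \<i>) ** (Ham \<omega>0 lam \<omega> g G t f ** U t f))) (at t)"
  shows "\<forall>t X. (is_diag X \<longrightarrow> is_diag (Phi \<mu> U t X))
             \<and> (zero_diag X \<longrightarrow> zero_diag (Phi \<mu> U t X))"
proof (intro allI)
  fix t X
  have sol: "solves_schroedinger (\<lambda>s. Ham \<omega>0 lam \<omega> g G s f) (\<lambda>s. U s f)" if "f \<in> L2" for f
    using assms(13) that by (simp add: solves_schroedinger_def)
  have U_uminus: "U t (- f) = sigma_z ** U t f ** sigma_z" if "f \<in> L2" for f
    using propagator_uminus[OF assms(5) _ that _ sol] assms(6,7,12) by (simp add: zero_diag_def)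
  note neg = uminus_measurable_L2_borel[OF assms(9,10)]
  note even = distr_uminus_even_L2[OF assms(9,10,11)]
  have Phi_nth_eq_0: "Phi \<mu> U t X $ i $ j = 0"
    if "\<And>f. f \<in> L2 \<Longrightarrow>
      (U t (- f) ** X ** adj (U t (- f))) $ i $ j = - (U t f ** X ** adj (U t f)) $ i $ j"
    for i j
    unfolding Phi_def by (rule integral_nth_nth_eq_0_if_odd[OF neg even]) (simp add: that assms(9))
  show "(is_diag X \<longrightarrow> is_diag (Phi \<mu> U t X)) \<and> (zero_diag X \<longrightarrow> zero_diag (Phi \<mu> U t X))"
    by (auto simp: is_diag_def zero_diag_def U_uminus sigma_z_conj_sandwich sigma_z_conj_is_diag
        sigma_z_conj_zero_diag sigma_z_conj_nth matrix_mult_minus_2 intro!: Phi_nth_eq_0)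
qed

end
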